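(* Let $\mathbb{F}$ be a field of characteristic $2$ with at least $4$ elements, let $k\geq 2$ be an integer, and let $B\in M_{4k}(\mathbb{F})$ be a non-derogative matrix. Let $a\in\mathbb{F}$ with $a\neq 0,1$. (a) If $\operatorname{Trace}(B)=c\neq 0$, then there exist $N,D\in M_{4k}(\mathbb{F})$ with $B=N+D$, $N^2=0$, and $D$ diagonalizable with every eigenvalue in $\{0,\ c,\ ca,\ c(a+1)\}$. (b) If $\operatorname{Trace}(B)=0$, then there exist $N,D\in M_{4k}(\mathbb{F})$ with $B=N+D$, $N^2=0$, and $D$ diagonalizable with every eigenvalue in $\{0,1,a,a+1\}$.
   Context: A square matrix is non-derogative if its minimal polynomial equals its characteristic polynomial. A matrix $D\in M_n(\mathbb{F})$ is diagonalizable if there exists an invertible $U\in M_n(\mathbb{F})$ such that $U^{-1}DU$ is diagonal. *)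

theory Defs
  imports "Jordan_Normal_Form.Matrix" "Jordan_Normal_Form.Char_Poly"
begin

definition mat_trace :: "'a::comm_ring_1 mat \<Rightarrow> 'a" where
  "mat_trace A = (\<Sum>i<dim_row A. A $$ (i,i))"

definition poly_mat_eval :: "'a::comm_ring_1 poly \<Rightarrow> 'a mat \<Rightarrow> 'a mat" where
  "poly_mat_eval p A = mat (dim_row A) (dim_row A)
     (\<lambda>(i,j). \<Sum>k\<le>degree p. coeff p k * (A ^\<^sub>m k) $$ (i,j))"

definition is_minimal_poly :: "'a::field mat \<Rightarrow> 'a poly \<Rightarrow> bool" where
  "is_minimal_poly A p \<longleftrightarrow>
     monic p \<and> poly_mat_eval p A = 0\<^sub>m (dim_row A) (dim_row A) \<and>
     (\<forall>q. q \<noteq> 0 \<and> poly_mat_eval q A = 0\<^sub>m (dim_row A) (dim_row A) \<longrightarrow> degree p \<le> degree q)"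

definition minimal_poly :: "'a::field mat \<Rightarrow> 'a poly" where
  "minimal_poly A = (THE p. is_minimal_poly A p)"

definition non_derogative :: "'a::field mat \<Rightarrow> bool" where
  "non_derogative A \<longleftrightarrow> minimal_poly A = char_poly A"

definition diagonalizable :: "'a::field mat \<Rightarrow> bool" where
  "diagonalizable D \<longleftrightarrow> (\<exists>U V. U \<in> carrier_mat (dim_row D) (dim_row D) \<and>
      V \<in> carrier_mat (dim_row D) (dim_row D) \<and>
      U * V = 1\<^sub>m (dim_row D) \<and> V * U = 1\<^sub>m (dim_row D) \<and> diagonal_mat (V * D * U))"

end

theory Submission
  imports Defs
begin

lemma mult_unit_vec_eq_col:
  fixes A :: "'a::semiring_1 mat"
  assumes "A \<in> carrier_mat nr n" and "j < n"
  shows "A *\<^sub>v unit_vec n j = col A j"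
  using assms by (intro eq_vecI) (auto simp: scalar_prod_right_unit)

lemma dim_poly_mat_eval [simp]:
  "dim_row (poly_mat_eval p A) = dim_row A" "dim_col (poly_mat_eval p A) = dim_row A"
  unfolding poly_mat_eval_def by simp_all

lemma poly_mat_eval_carrier [simp]:
  "A \<in> carrier_mat n n \<Longrightarrow> poly_mat_eval p A \<in> carrier_mat n n"
  unfolding carrier_mat_def by simp

lemma poly_mat_eval_index:
  assumes A: "A \<in> carrier_mat n n" and "i < n" "j < n" and "degree p \<le> N"
  shows "poly_mat_eval p A $$ (i, j) = (\<Sum>k\<le>N. coeff p k * (A ^\<^sub>m k) $$ (i, j))"
proof -
  have "(\<Sum>k\<le>degree p. coeff p k * (A ^\<^sub>m k) $$ (i, j)) = (\<Sum>k\<le>N. coeff p k * (A ^\<^sub>m k) $$ (i, j))"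
    by (rule sum.mono_neutral_left) (use assms in \<open>auto simp: coeff_eq_0\<close>)
  then show ?thesis
    using assms by (simp add: poly_mat_eval_def)
qed

lemma poly_mat_eval_pCons:
  assumes A: "A \<in> carrier_mat n n"
  shows "poly_mat_eval (pCons a p) A = a \<cdot>\<^sub>m 1\<^sub>m n + poly_mat_eval p A * A"
proof (rule eq_matI)
  fix i j
  assume "i < dim_row (a \<cdot>\<^sub>m 1\<^sub>m n + poly_mat_eval p A * A)"
    and "j < dim_col (a \<cdot>\<^sub>m 1\<^sub>m n + poly_mat_eval p A * A)"
  then have i: "i < n" and j: "j < n"
    using A by auto
  have "(poly_mat_eval p A * A) $$ (i, j) = (\<Sum>l<n. poly_mat_eval p A $$ (i, l) * A $$ (l, j))"
    using A i j by (auto simp: scalar_prod_def lessThan_atLeast0)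
  also have "\<dots> = (\<Sum>l<n. (\<Sum>k\<le>degree p. coeff p k * (A ^\<^sub>m k) $$ (i, l)) * A $$ (l, j))"
    using A i by (intro sum.cong refl) (simp add: poly_mat_eval_index[OF A i _ order.refl])
  also have "\<dots> = (\<Sum>k\<le>degree p. coeff p k * (\<Sum>l<n. (A ^\<^sub>m k) $$ (i, l) * A $$ (l, j)))"
    by (simp add: sum_distrib_left sum_distrib_right mult.assoc sum.swap[of _ "{..<n}"])
  also have "\<dots> = (\<Sum>k\<le>degree p. coeff (pCons a p) (Suc k) * (A ^\<^sub>m Suc k) $$ (i, j))"
    using A i j by (intro sum.cong refl) (auto simp: scalar_prod_def lessThan_atLeast0)
  finally have "(a \<cdot>\<^sub>m 1\<^sub>m n + poly_mat_eval p A * A) $$ (i, j) = coeff (pCons a p) 0 * (A ^\<^sub>m 0) $$ (i, j)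
      + (\<Sum>k\<le>degree p. coeff (pCons a p) (Suc k) * (A ^\<^sub>m Suc k) $$ (i, j))"
    using A i j by simp
  also have "\<dots> = poly_mat_eval (pCons a p) A $$ (i, j)"
    using poly_mat_eval_index[OF A i j degree_pCons_le] by (simp only: sum.atMost_Suc_shift)
  finally show "poly_mat_eval (pCons a p) A $$ (i, j) = (a \<cdot>\<^sub>m 1\<^sub>m n + poly_mat_eval p A * A) $$ (i, j)"
    by (rule sym)
qed (use A in auto)

lemma poly_mat_eval_pCons_0:
  assumes "A \<in> carrier_mat n n"
  shows "poly_mat_eval (pCons 0 p) A = poly_mat_eval p A * A"
  using poly_mat_eval_pCons[OF assms, of 0 p] assms by (intro eq_matI) auto

lemma poly_mat_eval_0 [simp]:
  "A \<in> carrier_mat n n \<Longrightarrow> poly_mat_eval 0 A = 0\<^sub>m n n"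
  by (intro eq_matI) (auto simp: poly_mat_eval_def)

lemma poly_mat_eval_const:
  assumes "A \<in> carrier_mat n n"
  shows "poly_mat_eval [:a:] A = a \<cdot>\<^sub>m 1\<^sub>m n"
  using poly_mat_eval_pCons[OF assms, of a 0] assms by (intro eq_matI) auto

lemma poly_mat_eval_one:
  "A \<in> carrier_mat n n \<Longrightarrow> poly_mat_eval 1 A = 1\<^sub>m n"
  using poly_mat_eval_const[of A n 1] by (intro eq_matI) (auto simp: one_pCons)

lemma poly_mat_eval_linear:
  assumes "A \<in> carrier_mat n n"
  shows "poly_mat_eval [:c, 1:] A = c \<cdot>\<^sub>m 1\<^sub>m n + A"
  using poly_mat_eval_pCons[OF assms, of c "[:1:]"] poly_mat_eval_one[OF assms] assms
  by (simp add: one_pCons)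

lemma poly_mat_eval_add:
  assumes A: "A \<in> carrier_mat n n"
  shows "poly_mat_eval (p + q) A = poly_mat_eval p A + poly_mat_eval q A"
proof (rule eq_matI)
  fix i j
  assume "i < dim_row (poly_mat_eval p A + poly_mat_eval q A)"
    and "j < dim_col (poly_mat_eval p A + poly_mat_eval q A)"
  then have ij: "i < n" "j < n"
    using A by auto
  let ?N = "max (degree p) (degree q)"
  have "degree (p + q) \<le> ?N"
    by (rule degree_add_le) auto
  then show "poly_mat_eval (p + q) A $$ (i, j) = (poly_mat_eval p A + poly_mat_eval q A) $$ (i, j)"
    using A ij by (simp add: poly_mat_eval_index[of A n i j _ ?N] distrib_right sum.distrib)
qed (use A in auto)

lemma poly_mat_eval_smult:
  assumes A: "A \<in> carrier_mat n n"
  shows "poly_mat_eval (Polynomial.smult c p) A = c \<cdot>\<^sub>m poly_mat_eval p A"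
proof (rule eq_matI)
  fix i j
  assume "i < dim_row (c \<cdot>\<^sub>m poly_mat_eval p A)" and "j < dim_col (c \<cdot>\<^sub>m poly_mat_eval p A)"
  then have ij: "i < n" "j < n"
    using A by auto
  have "poly_mat_eval (Polynomial.smult c p) A $$ (i, j)
      = (\<Sum>k\<le>degree p. coeff (Polynomial.smult c p) k * (A ^\<^sub>m k) $$ (i, j))"
    by (rule poly_mat_eval_index[OF A ij degree_smult_le])
  then show "poly_mat_eval (Polynomial.smult c p) A $$ (i, j) = (c \<cdot>\<^sub>m poly_mat_eval p A) $$ (i, j)"
    using A ij by (simp add: poly_mat_eval_index[OF A ij order.refl] sum_distrib_left mult.assoc)
qed (use A in auto)

lemma poly_mat_eval_diff:
  assumes A: "A \<in> carrier_mat n n"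
  shows "poly_mat_eval (p - q) A = poly_mat_eval p A - poly_mat_eval q A"
  using poly_mat_eval_add[OF A, of "p - q" q] A by (intro eq_matI) auto

lemma poly_mat_eval_mult:
  assumes A: "A \<in> carrier_mat n n"
  shows "poly_mat_eval (p * q) A = poly_mat_eval p A * poly_mat_eval q A"
proof (induct q rule: pCons_induct)
  case 0
  then show ?case
    using A by simp
next
  case (pCons b q)
  have P: "poly_mat_eval p A \<in> carrier_mat n n" and Q: "poly_mat_eval q A \<in> carrier_mat n n"
    using A by auto
  have "poly_mat_eval (p * pCons b q) A = b \<cdot>\<^sub>m poly_mat_eval p A + poly_mat_eval p A * poly_mat_eval q A * A"
    using A pCons by (simp add: mult_pCons_right poly_mat_eval_add poly_mat_eval_smult poly_mat_eval_pCons_0)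
  also have "b \<cdot>\<^sub>m poly_mat_eval p A = poly_mat_eval p A * (b \<cdot>\<^sub>m 1\<^sub>m n)"
    using P by (simp add: mult_smult_distrib[OF P one_carrier_mat] right_mult_one_mat)
  also have "poly_mat_eval p A * poly_mat_eval q A * A = poly_mat_eval p A * (poly_mat_eval q A * A)"
    by (rule assoc_mult_mat[OF P Q A])
  also have "poly_mat_eval p A * (b \<cdot>\<^sub>m 1\<^sub>m n) + \<dots> = poly_mat_eval p A * (b \<cdot>\<^sub>m 1\<^sub>m n + poly_mat_eval q A * A)"
    using A P Q by (intro mult_add_distrib_mat[symmetric, of _ n n]) auto
  finally show ?case
    by (simp only: poly_mat_eval_pCons[OF A])
qed

lemma poly_mat_eval_mult_vec_carrier [simp]:
  "A \<in> carrier_mat n n \<Longrightarrow> v \<in> carrier_vec n \<Longrightarrow> poly_mat_eval p A *\<^sub>v v \<in> carrier_vec n"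
  by (rule mult_mat_vec_carrier) auto

lemma poly_mat_eval_zero_vec [simp]:
  "A \<in> carrier_mat n n \<Longrightarrow> poly_mat_eval p A *\<^sub>v 0\<^sub>v n = 0\<^sub>v n"
  by (intro eq_vecI) (auto simp: scalar_prod_def)

lemma poly_mat_eval_mult_vec:
  assumes "A \<in> carrier_mat n n" and "u \<in> carrier_vec n"
  shows "poly_mat_eval (p * q) A *\<^sub>v u = poly_mat_eval p A *\<^sub>v (poly_mat_eval q A *\<^sub>v u)"
  unfolding poly_mat_eval_mult[OF assms(1)]
  using assms by (intro assoc_mult_mat_vec[of _ n n _ n]) auto

lemma poly_mat_eval_add_vec:
  assumes "A \<in> carrier_mat n n" and "u \<in> carrier_vec n"
  shows "poly_mat_eval (p + q) A *\<^sub>v u = poly_mat_eval p A *\<^sub>v u + poly_mat_eval q A *\<^sub>v u"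
  unfolding poly_mat_eval_add[OF assms(1)]
  using assms by (intro add_mult_distrib_mat_vec[of _ n n]) auto

lemma poly_mat_eval_dvd_vec:
  assumes A: "A \<in> carrier_mat n n" and u: "u \<in> carrier_vec n"
    and "f dvd g" and f: "poly_mat_eval f A *\<^sub>v u = 0\<^sub>v n"
  shows "poly_mat_eval g A *\<^sub>v u = 0\<^sub>v n"
proof -
  obtain h where "g = h * f"
    using \<open>f dvd g\<close> by (auto simp: dvd_def mult.commute)
  then show ?thesis
    using A u f by (simp only: poly_mat_eval_mult_vec poly_mat_eval_zero_vec)
qed

lemma poly_mat_eval_mult_vec_index:
  assumes A: "A \<in> carrier_mat n n" and v: "v \<in> carrier_vec n" and r: "r < n"
    and "degree p \<le> N"
  shows "(poly_mat_eval p A *\<^sub>v v) $ r = (\<Sum>k\<le>N. coeff p k * ((A ^\<^sub>m k) *\<^sub>v v) $ r)"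
proof -
  have "(poly_mat_eval p A *\<^sub>v v) $ r = (\<Sum>l<n. poly_mat_eval p A $$ (r, l) * v $ l)"
    using A v r by (auto simp: scalar_prod_def lessThan_atLeast0)
  also have "\<dots> = (\<Sum>l<n. (\<Sum>k\<le>N. coeff p k * (A ^\<^sub>m k) $$ (r, l)) * v $ l)"
    using A r \<open>degree p \<le> N\<close> by (intro sum.cong refl) (simp add: poly_mat_eval_index)
  also have "\<dots> = (\<Sum>k\<le>N. coeff p k * (\<Sum>l<n. (A ^\<^sub>m k) $$ (r, l) * v $ l))"
    by (simp add: sum_distrib_left sum_distrib_right mult.assoc sum.swap[of _ "{..<n}"])
  also have "\<dots> = (\<Sum>k\<le>N. coeff p k * ((A ^\<^sub>m k) *\<^sub>v v) $ r)"
    using A v r by (auto simp: scalar_prod_def lessThan_atLeast0)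
  finally show ?thesis .
qed

text \<open>The \<open>n + 1\<close> vectors \<open>A\<^sup>k v\<close>, \<open>k \<le> n\<close>, are linearly dependent; a dependence
  is found in the kernel of their matrix padded by a zero row.\<close>

lemma vec_annihilator_exists:
  fixes A :: "'a::field mat"
  assumes A: "A \<in> carrier_mat n n" and v: "v \<in> carrier_vec n"
  obtains g where "g \<noteq> 0" and "poly_mat_eval g A *\<^sub>v v = 0\<^sub>v n"
proof -
  define K where "K = mat (Suc n) (Suc n) (\<lambda>(r, k). if r < n then ((A ^\<^sub>m k) *\<^sub>v v) $ r else 0)"
  have K: "K \<in> carrier_mat (Suc n) (Suc n)"
    by (simp add: K_def)
  have "K\<^sup>T *\<^sub>v unit_vec (Suc n) n = 0\<^sub>v (Suc n)"
    using K by (simp add: mult_unit_vec_eq_col) (auto simp: K_def)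
  then have "det K\<^sup>T = 0"
    using K by (subst det_0_iff_vec_prod_zero_field[of _ "Suc n"])
      (auto intro!: exI[of _ "unit_vec (Suc n) n"])
  then have "det K = 0"
    using K by (simp add: det_transpose)
  then obtain c where c: "c \<in> carrier_vec (Suc n)" "c \<noteq> 0\<^sub>v (Suc n)" "K *\<^sub>v c = 0\<^sub>v (Suc n)"
    using det_0_iff_vec_prod_zero_field[OF K] by auto
  define g where "g = Poly (map (\<lambda>k. c $ k) [0..<Suc n])"
  have coeff_g: "coeff g k = (if k < Suc n then c $ k else 0)" for k
    unfolding g_def by (simp add: nth_default_def del: upt_Suc)
  have deg_g: "degree g \<le> n"
    by (rule degree_le) (auto simp: coeff_g)
  have "g \<noteq> 0"
  proof
    assume "g = 0"
    then have "c $ k = 0" if "k < Suc n" for k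
      using coeff_g[of k] that by simp
    then have "c = 0\<^sub>v (Suc n)"
      using c(1) by (intro eq_vecI) auto
    with c(2) show False ..
  qed
  moreover have "poly_mat_eval g A *\<^sub>v v = 0\<^sub>v n"
  proof (rule eq_vecI)
    fix r
    assume "r < dim_vec (0\<^sub>v n :: 'a vec)"
    then have r: "r < n"
      by simp
    have "(poly_mat_eval g A *\<^sub>v v) $ r = (\<Sum>k\<le>n. coeff g k * ((A ^\<^sub>m k) *\<^sub>v v) $ r)"
      by (rule poly_mat_eval_mult_vec_index[OF A v r deg_g])
    also have "\<dots> = (\<Sum>k<Suc n. K $$ (r, k) * c $ k)"
      unfolding lessThan_Suc_atMost using r
      by (intro sum.cong refl) (auto simp: coeff_g K_def mult.commute less_Suc_eq_le)
    also have "\<dots> = (K *\<^sub>v c) $ r"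
      using K c(1) r
      by (auto simp: scalar_prod_def lessThan_atLeast0 simp del: sum.lessThan_Suc sum.atLeast0_lessThan_Suc)
    finally show "(poly_mat_eval g A *\<^sub>v v) $ r = 0\<^sub>v n $ r"
      using c(3) r by simp
  qed (use A in simp)
  ultimately show thesis
    by (rule that)
qed

lemma mat_annihilator_exists:
  fixes A :: "'a::field mat"
  assumes A: "A \<in> carrier_mat n n"
  obtains g where "g \<noteq> 0" and "poly_mat_eval g A = 0\<^sub>m n n"
proof -
  have "\<forall>j\<in>{..<n}. \<exists>g. g \<noteq> 0 \<and> poly_mat_eval g A *\<^sub>v unit_vec n j = 0\<^sub>v n"
    using vec_annihilator_exists[OF A unit_vec_carrier] by metis
  then obtain g where g: "\<And>j. j < n \<Longrightarrow> g j \<noteq> 0"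
    and g_ann: "\<And>j. j < n \<Longrightarrow> poly_mat_eval (g j) A *\<^sub>v unit_vec n j = 0\<^sub>v n"
    by (metis bchoice lessThan_iff)
  define G where "G = (\<Prod>j<n. g j)"
  have "col (poly_mat_eval G A) j = col (0\<^sub>m n n) j" if j: "j < n" for j
  proof -
    have "G = (\<Prod>l\<in>{..<n} - {j}. g l) * g j"
      using j by (simp add: G_def prod.remove mult.commute)
    then have "poly_mat_eval G A *\<^sub>v unit_vec n j
        = poly_mat_eval (\<Prod>l\<in>{..<n} - {j}. g l) A *\<^sub>v (poly_mat_eval (g j) A *\<^sub>v unit_vec n j)"
      using A by (simp add: poly_mat_eval_mult_vec)
    then show ?thesis
      using A j g_ann mult_unit_vec_eq_col[of "poly_mat_eval G A" n n j] by simp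
  qed
  then have "poly_mat_eval G A = 0\<^sub>m n n"
    using A by (intro mat_col_eqI) auto
  moreover have "G \<noteq> 0"
    using g by (simp add: G_def)
  ultimately show thesis
    using that by blast
qed

lemma is_minimal_poly_unique:
  fixes A :: "'a::field mat"
  assumes A: "A \<in> carrier_mat n n" and p: "is_minimal_poly A p" and q: "is_minimal_poly A q"
  shows "p = q"
proof (rule ccontr)
  assume "p \<noteq> q"
  have dim: "dim_row A = n"
    using A by simp
  have mp: "monic p" "poly_mat_eval p A = 0\<^sub>m n n" and mq: "monic q" "poly_mat_eval q A = 0\<^sub>m n n"
    using p q by (auto simp: is_minimal_poly_def dim)
  then have "p \<noteq> 0" "q \<noteq> 0"
    by auto
  have "degree p = degree q"
    using p q mp mq \<open>p \<noteq> 0\<close> \<open>q \<noteq> 0\<close> by (auto simp: is_minimal_poly_def dim intro: antisym)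
  then have "degree (p - q) \<le> degree p" and "coeff (p - q) (degree p) = 0"
    using mp mq by (auto intro: degree_diff_le)
  then have "degree (p - q) < degree p"
    using \<open>p \<noteq> q\<close> by (metis le_neq_implies_less leading_coeff_0_iff right_minus_eq)
  moreover have "poly_mat_eval (p - q) A = 0\<^sub>m n n"
    using A mp mq by (simp add: poly_mat_eval_diff)
  then have "degree p \<le> degree (p - q)"
    using p \<open>p \<noteq> q\<close> by (auto simp: is_minimal_poly_def dim)
  ultimately show False
    by simp
qed

lemma minimal_poly_is_minimal_poly:
  fixes A :: "'a::field mat"
  assumes A: "A \<in> carrier_mat n n"
  shows "is_minimal_poly A (minimal_poly A)"
proof -
  let ?P = "\<lambda>q. q \<noteq> 0 \<and> poly_mat_eval q A = 0\<^sub>m n n"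
  obtain g where "?P g"
    using mat_annihilator_exists[OF A] by blast
  then obtain q where q: "?P q" and least: "\<And>r. ?P r \<Longrightarrow> degree q \<le> degree r"
    using ex_has_least_nat[of ?P g degree] by blast
  define \<mu> where "\<mu> = Polynomial.smult (inverse (lead_coeff q)) q"
  have \<mu>: "is_minimal_poly A \<mu>"
    using A q least by (auto simp: is_minimal_poly_def \<mu>_def poly_mat_eval_smult)
  have "minimal_poly A = \<mu>"
    unfolding minimal_poly_def by (rule the_equality) (use \<mu> is_minimal_poly_unique[OF A] in auto)
  with \<mu> show ?thesis
    by simp
qed

lemma field_poly_bezout:
  fixes a b :: "'a::field poly"
  obtains s t where "s * a + t * b dvd a" and "s * a + t * b dvd b"
proof (cases "a = 0 \<and> b = 0")
  case True
  then show thesis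
    using that[of 0 0] by simp
next
  case False
  let ?P = "\<lambda>h. h \<noteq> 0 \<and> (\<exists>s t. h = s * a + t * b)"
  have "?P a \<or> ?P b"
    using False by (metis add.commute add_0 mult_1 mult_zero_left)
  then obtain h0 where "?P h0"
    by blast
  then obtain h where h: "?P h" and least: "\<And>k. ?P k \<Longrightarrow> degree h \<le> degree k"
    using ex_has_least_nat[of ?P h0 degree] by blast
  then obtain s t where st: "h = s * a + t * b"
    by blast
  have "h dvd x" if "x = a \<or> x = b" for x
  proof (rule ccontr)
    assume "\<not> h dvd x"
    then have "x mod h \<noteq> 0"
      by (simp add: dvd_eq_mod_eq_0)
    obtain \<alpha> \<beta> where x: "x = \<alpha> * a + \<beta> * b"
      using \<open>x = a \<or> x = b\<close> by (metis add.commute add_0 mult_1 mult_zero_left)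
    have "x mod h = (\<alpha> - x div h * s) * a + (\<beta> - x div h * t) * b"
      using div_mult_mod_eq[of x h] by (simp add: x st algebra_simps)
    with \<open>x mod h \<noteq> 0\<close> have "degree h \<le> degree (x mod h)"
      by (intro least) blast
    moreover have "degree (x mod h) < degree h"
      using degree_mod_less[of h x] h \<open>x mod h \<noteq> 0\<close> by blast
    ultimately show False
      by simp
  qed
  then show thesis
    using that st by blast
qed

lemma field_poly_coprime_bezout:
  fixes a b :: "'a::field poly"
  assumes "a \<noteq> 0" and no_common_factor: "\<And>p. irreducible p \<Longrightarrow> p dvd a \<Longrightarrow> p dvd b \<Longrightarrow> False"
  obtains s t where "s * a + t * b = 1"
proof -
  obtain s t where h: "s * a + t * b dvd a" "s * a + t * b dvd b"
    by (rule field_poly_bezout)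
  let ?h = "s * a + t * b"
  have "?h \<noteq> 0"
    using h(1) \<open>a \<noteq> 0\<close> by auto
  have "degree ?h = 0"
  proof (rule ccontr)
    assume "degree ?h \<noteq> 0"
    then obtain p r where "irreducible p" "?h = p * r"
      using irreducible_monic_factor by blast
    then show False
      using no_common_factor h by (metis dvd_trans dvd_triv_left)
  qed
  then obtain h' where "1 = ?h * h'"
    using \<open>?h \<noteq> 0\<close> is_unit_iff_degree by (metis dvdE)
  then have "(h' * s) * a + (h' * t) * b = 1"
    by (simp add: algebra_simps)
  then show thesis
    by (rule that)
qed

lemma prime_elem_dvd_prodE:
  fixes f :: "'b \<Rightarrow> 'a::comm_semiring_1"
  assumes p: "prime_elem p" and "finite S" and "p dvd (\<Prod>x\<in>S. f x)"
  obtains x where "x \<in> S" and "p dvd f x"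
  using \<open>finite S\<close> \<open>p dvd (\<Prod>x\<in>S. f x)\<close> that
proof (induct S rule: finite_induct)
  case empty
  then show ?case
    using prime_elem_not_unit[OF p] by simp
next
  case (insert x S)
  then show ?case
    using prime_elem_dvd_mult_iff[OF p] by auto
qed

lemma poly_mat_eval_bezout_vec:
  assumes A: "A \<in> carrier_mat n n" and u: "u \<in> carrier_vec n" and st: "s * f + t * g = 1"
    and f: "poly_mat_eval f A *\<^sub>v u = 0\<^sub>v n" and g: "poly_mat_eval g A *\<^sub>v u = 0\<^sub>v n"
  shows "u = 0\<^sub>v n"
proof -
  have "u = poly_mat_eval (s * f + t * g) A *\<^sub>v u"
    using A u by (simp add: st poly_mat_eval_one)
  also have "\<dots> = 0\<^sub>v n"
    using A u f g by (simp add: poly_mat_eval_add_vec poly_mat_eval_mult_vec)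
  finally show ?thesis .
qed

definition local_min_poly :: "'a::comm_ring_1 mat \<Rightarrow> 'a vec \<Rightarrow> 'a poly \<Rightarrow> bool" where
  "local_min_poly A u f \<longleftrightarrow> (\<forall>g. poly_mat_eval g A *\<^sub>v u = 0\<^sub>v (dim_row A) \<longleftrightarrow> f dvd g)"

lemma local_min_poly_mult:
  assumes A: "A \<in> carrier_mat n n" and u: "u \<in> carrier_vec n" and w: "w \<in> carrier_vec n"
    and st: "s * f + t * g = 1"
    and fu: "local_min_poly A u f" and gw: "local_min_poly A w g"
  shows "local_min_poly A (u + w) (f * g)"
proof -
  have fu: "\<And>h. poly_mat_eval h A *\<^sub>v u = 0\<^sub>v n \<longleftrightarrow> f dvd h"
    and gw: "\<And>h. poly_mat_eval h A *\<^sub>v w = 0\<^sub>v n \<longleftrightarrow> g dvd h"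
    using A fu gw by (auto simp: local_min_poly_def)
  have sum: "poly_mat_eval h A *\<^sub>v (u + w) = poly_mat_eval h A *\<^sub>v u + poly_mat_eval h A *\<^sub>v w" for h
    using A u w by (simp add: mult_add_distrib_mat_vec[of _ n n])
  have "poly_mat_eval h A *\<^sub>v (u + w) = 0\<^sub>v n \<longleftrightarrow> f * g dvd h" for h
  proof
    assume "f * g dvd h"
    then have "f dvd h" "g dvd h"
      by (auto intro: dvd_mult_left dvd_mult_right)
    then have "poly_mat_eval h A *\<^sub>v u = 0\<^sub>v n" "poly_mat_eval h A *\<^sub>v w = 0\<^sub>v n"
      using fu gw by blast+
    then show "poly_mat_eval h A *\<^sub>v (u + w) = 0\<^sub>v n"
      using sum by simp
  next
    assume h: "poly_mat_eval h A *\<^sub>v (u + w) = 0\<^sub>v n"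
    have hx: "poly_mat_eval (x * h) A *\<^sub>v u + poly_mat_eval (x * h) A *\<^sub>v w = 0\<^sub>v n" for x
      using A u w h sum[of "x * h"] by (simp add: poly_mat_eval_mult_vec)
    have carrier: "poly_mat_eval x A *\<^sub>v y \<in> carrier_vec n" if "y \<in> carrier_vec n" for x y
      using A that by (auto intro!: mult_mat_vec_carrier[of _ n n])
    have "poly_mat_eval (g * h) A *\<^sub>v u = poly_mat_eval (g * h) A *\<^sub>v u + poly_mat_eval (g * h) A *\<^sub>v w"
      using gw[of "g * h"] carrier[OF u] by simp
    also have "\<dots> = 0\<^sub>v n"
      by (rule hx)
    finally have "f dvd g * h"
      using fu by blast
    have "poly_mat_eval (f * h) A *\<^sub>v w = poly_mat_eval (f * h) A *\<^sub>v u + poly_mat_eval (f * h) A *\<^sub>v w"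
      using fu[of "f * h"] carrier[OF w] by simp
    also have "\<dots> = 0\<^sub>v n"
      by (rule hx)
    finally have "g dvd f * h"
      using gw by blast
    have "h = (s * f + t * g) * h"
      using st by simp
    then have h_eq: "h = s * (f * h) + t * (g * h)"
      by (simp add: algebra_simps)
    have "f dvd h"
      by (subst h_eq) (intro dvd_add dvd_mult dvd_triv_left \<open>f dvd g * h\<close>)
    moreover have "g dvd h"
      by (subst h_eq) (intro dvd_add dvd_mult dvd_triv_left \<open>g dvd f * h\<close>)
    ultimately have "f * g dvd f * h" and "f * g dvd h * g"
      by (auto intro: mult_dvd_mono)
    then have "f * g dvd s * (f * h) + t * (g * h)"
      by (simp add: dvd_add dvd_mult mult.commute[of g h])
    then show "f * g dvd h"
      using h_eq by simp
  qed
  then show ?thesis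
    using A by (simp add: local_min_poly_def)
qed

lemma local_min_poly_prime_power:
  fixes A :: "'a::field mat"
  assumes A: "A \<in> carrier_mat n n" and w: "w \<in> carrier_vec n" and a: "irreducible a"
    and ann: "poly_mat_eval (a ^ Suc e) A *\<^sub>v w = 0\<^sub>v n"
    and not_ann: "poly_mat_eval (a ^ e) A *\<^sub>v w \<noteq> 0\<^sub>v n"
  shows "local_min_poly A w (a ^ Suc e)"
proof -
  have "a ^ k dvd g" if g: "poly_mat_eval g A *\<^sub>v w = 0\<^sub>v n" and "k \<le> Suc e" for g k
    using \<open>k \<le> Suc e\<close>
  proof (induct k)
    case 0
    then show ?case
      by simp
  next
    case (Suc k)
    then have "a ^ k dvd g"
      by simp
    then obtain g1 where g1: "g = a ^ k * g1"
      by (rule dvdE)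
    show ?case
    proof (rule ccontr)
      assume "\<not> a ^ Suc k dvd g"
      then have "\<not> a dvd g1"
        by (auto simp: g1 mult_dvd_mono)
      obtain s t where st: "s * a + t * g1 = 1"
      proof (rule field_poly_coprime_bezout)
        show "a \<noteq> 0"
          using a by auto
        fix p
        assume "irreducible p" "p dvd a" "p dvd g1"
        then show False
          using a \<open>\<not> a dvd g1\<close> irreducible_not_unit by (metis dvd_trans irreducibleD')
      qed
      let ?z = "poly_mat_eval (a ^ e) A *\<^sub>v w"
      have "poly_mat_eval a A *\<^sub>v ?z = poly_mat_eval (a ^ Suc e) A *\<^sub>v w"
        using A w by (simp add: poly_mat_eval_mult_vec)
      then have "poly_mat_eval a A *\<^sub>v ?z = 0\<^sub>v n"
        using ann by simp
      moreover have "g1 * a ^ e = a ^ (e - k) * g"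
        using \<open>Suc k \<le> Suc e\<close> by (simp add: g1 power_add[symmetric] algebra_simps)
      then have "poly_mat_eval g1 A *\<^sub>v ?z = poly_mat_eval (a ^ (e - k)) A *\<^sub>v (poly_mat_eval g A *\<^sub>v w)"
        using A w by (metis poly_mat_eval_mult_vec)
      then have "poly_mat_eval g1 A *\<^sub>v ?z = 0\<^sub>v n"
        using A g by simp
      moreover have "?z \<in> carrier_vec n"
        using A w by (metis mult_mat_vec_carrier poly_mat_eval_carrier)
      ultimately have "?z = 0\<^sub>v n"
        using poly_mat_eval_bezout_vec[OF A _ st] by blast
      with not_ann show False ..
    qed
  qed
  then have "poly_mat_eval g A *\<^sub>v w = 0\<^sub>v n \<longleftrightarrow> a ^ Suc e dvd g" for g
    using poly_mat_eval_dvd_vec[OF A w _ ann] by blast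
  then show ?thesis
    using A by (simp add: local_min_poly_def)
qed

definition cyclic_vector :: "'a::field mat \<Rightarrow> 'a vec \<Rightarrow> bool" where
  "cyclic_vector A v \<longleftrightarrow> v \<in> carrier_vec (dim_row A) \<and>
     (\<forall>g. g \<noteq> 0 \<longrightarrow> degree g < dim_row A \<longrightarrow> poly_mat_eval g A *\<^sub>v v \<noteq> 0\<^sub>v (dim_row A))"

lemma nonzero_mat_obtain_vec:
  fixes M :: "'a::semiring_1 mat"
  assumes M: "M \<in> carrier_mat n n" and "M \<noteq> 0\<^sub>m n n"
  obtains x where "x \<in> carrier_vec n" and "M *\<^sub>v x \<noteq> 0\<^sub>v n"
proof -
  have "\<exists>j<n. col M j \<noteq> col (0\<^sub>m n n) j"
    using M \<open>M \<noteq> 0\<^sub>m n n\<close> mat_col_eqI[of "0\<^sub>m n n" M] by auto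
  then obtain j where "j < n" "M *\<^sub>v unit_vec n j \<noteq> 0\<^sub>v n"
    using M by (auto simp: mult_unit_vec_eq_col)
  then show thesis
    using that unit_vec_carrier by blast
qed

lemma cyclic_vector_exists:
  fixes A :: "'a::field mat"
  assumes A: "A \<in> carrier_mat n n" and \<mu>: "is_minimal_poly A \<mu>" and deg: "degree \<mu> = n"
  obtains v where "cyclic_vector A v"
proof -
  have dim: "dim_row A = n"
    using A by simp
  have mon: "monic \<mu>" and ann: "poly_mat_eval \<mu> A = 0\<^sub>m n n"
    and least: "\<And>q. q \<noteq> 0 \<Longrightarrow> poly_mat_eval q A = 0\<^sub>m n n \<Longrightarrow> n \<le> degree q"
    using \<mu> deg by (auto simp: is_minimal_poly_def dim)
  obtain as e where fin: "finite as" and \<mu>_eq: "\<mu> = (\<Prod>a\<in>as. a ^ Suc (e a))"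
    and irr: "as \<subseteq> {q. irreducible q \<and> monic q}"
    using monic_irreducible_factorization[OF mon] by blast
  have primary: "\<exists>w\<in>carrier_vec n. local_min_poly A w (a ^ Suc (e a))" if a: "a \<in> as" for a
  proof -
    define Q where "Q = (\<Prod>b\<in>as - {a}. b ^ Suc (e b))"
    have \<mu>_a: "\<mu> = a * (a ^ e a * Q)"
      using fin a by (simp add: \<mu>_eq Q_def prod.remove mult.assoc)
    have "\<mu> \<noteq> 0"
      using mon by auto
    then have "a \<noteq> 0" and Q: "a ^ e a * Q \<noteq> 0"
      unfolding \<mu>_a by auto
    have "degree a \<noteq> 0"
      using a irr \<open>a \<noteq> 0\<close> irreducible_not_unit is_unit_iff_degree by blast
    moreover have "degree \<mu> = degree a + degree (a ^ e a * Q)"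
      unfolding \<mu>_a using \<open>a \<noteq> 0\<close> Q by (rule degree_mult_eq)
    ultimately have "degree (a ^ e a * Q) < n"
      using deg by simp
    have "poly_mat_eval (a ^ e a * Q) A \<noteq> 0\<^sub>m n n"
    proof
      assume "poly_mat_eval (a ^ e a * Q) A = 0\<^sub>m n n"
      then have "n \<le> degree (a ^ e a * Q)"
        by (rule least[OF Q])
      with \<open>degree (a ^ e a * Q) < n\<close> show False
        by simp
    qed
    then obtain x where x: "x \<in> carrier_vec n" and nz: "poly_mat_eval (a ^ e a * Q) A *\<^sub>v x \<noteq> 0\<^sub>v n"
      by (rule nonzero_mat_obtain_vec[OF poly_mat_eval_carrier[OF A]])
    define w where "w = poly_mat_eval Q A *\<^sub>v x"
    have w: "w \<in> carrier_vec n"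
      unfolding w_def using A x by (intro mult_mat_vec_carrier[of _ n n]) auto
    have "poly_mat_eval (a ^ Suc (e a)) A *\<^sub>v w = poly_mat_eval \<mu> A *\<^sub>v x"
      using A x by (simp add: w_def \<mu>_a poly_mat_eval_mult_vec mult.assoc)
    also have "\<dots> = 0\<^sub>v n"
      using A x ann by auto
    finally have "local_min_poly A w (a ^ Suc (e a))"
      using A x a irr nz by (intro local_min_poly_prime_power[OF A w])
        (auto simp: w_def poly_mat_eval_mult_vec)
    with w show ?thesis
      by blast
  qed
  have "\<exists>u\<in>carrier_vec n. local_min_poly A u (\<Prod>b\<in>S. b ^ Suc (e b))" if "S \<subseteq> as" for S
    using finite_subset[OF that fin] that
  proof (induct S rule: finite_induct)
    case empty
    have "local_min_poly A (0\<^sub>v n) 1"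
      using A by (simp add: local_min_poly_def)
    then show ?case
      by auto
  next
    case (insert a S)
    then obtain u where u: "u \<in> carrier_vec n" "local_min_poly A u (\<Prod>b\<in>S. b ^ Suc (e b))"
      by auto
    obtain w where w: "w \<in> carrier_vec n" "local_min_poly A w (a ^ Suc (e a))"
      using primary insert by auto
    have a: "irreducible a" "monic a"
      using irr insert by auto
    obtain s t where st: "s * a ^ Suc (e a) + t * (\<Prod>b\<in>S. b ^ Suc (e b)) = 1"
    proof (rule field_poly_coprime_bezout)
      show "a ^ Suc (e a) \<noteq> 0"
        using a by auto
      fix p
      assume p: "irreducible p" "p dvd a ^ Suc (e a)" "p dvd (\<Prod>b\<in>S. b ^ Suc (e b))"
      have prime: "prime_elem p"
        using p(1) by (rule field_poly_irreducible_imp_prime)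
      then have "a dvd p"
        using a p prime_elem_dvd_power irreducible_not_unit by (metis irreducibleD')
      obtain b where b: "b \<in> S" "p dvd b ^ Suc (e b)"
        using prime_elem_dvd_prodE[OF prime insert(1) p(3)] .
      then have "a dvd b"
        using prime prime_elem_dvd_power \<open>a dvd p\<close> dvd_trans by blast
      moreover have "irreducible b" "monic b"
        using irr insert b by auto
      ultimately have "a = b"
        using a irreducible\<^sub>d_dvd_eq[of a b] by simp
      with b insert show False
        by simp
    qed
    have "local_min_poly A (w + u) (a ^ Suc (e a) * (\<Prod>b\<in>S. b ^ Suc (e b)))"
      by (rule local_min_poly_mult[OF A w(1) u(1) st w(2) u(2)])
    then show ?case
      using insert w u by auto
  qed
  then obtain u where u: "u \<in> carrier_vec n" "local_min_poly A u \<mu>"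
    using \<mu>_eq by blast
  have "cyclic_vector A u"
    unfolding cyclic_vector_def dim
  proof (intro conjI allI impI u(1))
    fix g :: "'a poly"
    assume "g \<noteq> 0" "degree g < n"
    show "poly_mat_eval g A *\<^sub>v u \<noteq> 0\<^sub>v n"
    proof
      assume "poly_mat_eval g A *\<^sub>v u = 0\<^sub>v n"
      then have "\<mu> dvd g"
        using u(2) dim by (simp add: local_min_poly_def)
      then have "n \<le> degree g"
        using \<open>g \<noteq> 0\<close> deg by (metis dvd_imp_degree_le)
      with \<open>degree g < n\<close> show False
        by simp
    qed
  qed
  then show thesis
    by (rule that)
qed

lemma non_derogative_cyclic_vector:
  fixes A :: "'a::field mat"
  assumes A: "A \<in> carrier_mat n n" and "non_derogative A"
  obtains v where "cyclic_vector A v"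
proof (rule cyclic_vector_exists[OF A minimal_poly_is_minimal_poly[OF A]])
  show "degree (minimal_poly A) = n"
    using assms degree_monic_char_poly[OF A] by (simp add: non_derogative_def)
qed

lemma det_nonzero_obtain_inverse:
  fixes A :: "'a::field mat"
  assumes A: "A \<in> carrier_mat n n" and "det A \<noteq> 0"
  obtains B where "B \<in> carrier_mat n n" and "A * B = 1\<^sub>m n" and "B * A = 1\<^sub>m n"
proof -
  obtain B where B: "B \<in> carrier_mat n n" and "B * A = 1\<^sub>m n"
    using det_non_zero_imp_unit[OF assms, of "()"] by (auto simp: Units_def ring_mat_def)
  moreover have "A * B = 1\<^sub>m n"
    using mat_mult_left_right_inverse[OF B A \<open>B * A = 1\<^sub>m n\<close>] .
  ultimately show thesis
    using that by blast
qed

lemma poly_mat_eval_X: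
  "A \<in> carrier_mat n n \<Longrightarrow> poly_mat_eval [:0, 1:] A = A"
  using poly_mat_eval_linear[of A n 0] by (intro eq_matI) auto

lemma poly_mat_eval_smult_vec:
  assumes A: "A \<in> carrier_mat n n" and v: "v \<in> carrier_vec n"
  shows "poly_mat_eval (Polynomial.smult c p) A *\<^sub>v v = c \<cdot>\<^sub>v (poly_mat_eval p A *\<^sub>v v)"
  using A v by (intro eq_vecI) (auto simp: poly_mat_eval_smult scalar_prod_def sum_distrib_left mult.assoc)

lemma poly_mat_eval_sum_smult_vec_index:
  assumes A: "A \<in> carrier_mat n n" and v: "v \<in> carrier_vec n" and r: "r < n"
  shows "(poly_mat_eval (\<Sum>i<(m::nat). Polynomial.smult (c i) (p i)) A *\<^sub>v v) $ r
    = (\<Sum>i<m. c i * (poly_mat_eval (p i) A *\<^sub>v v) $ r)"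
proof (induct m)
  case 0
  then show ?case
    using A v r by simp
next
  case (Suc m)
  then show ?case
    using A v r by (simp add: poly_mat_eval_add_vec poly_mat_eval_smult_vec)
qed

definition newton_poly :: "(nat \<Rightarrow> 'a::comm_ring_1) \<Rightarrow> nat \<Rightarrow> 'a poly" where
  "newton_poly d i = (\<Prod>j<i. [:- d j, 1:])"

lemma newton_poly_Suc: "newton_poly d (Suc i) = [:- d i, 1:] * newton_poly d i"
  by (simp add: newton_poly_def mult.commute)

lemma monic_newton_poly: "monic (newton_poly d i :: 'a::field poly)"
proof (induct i)
  case 0
  then show ?case
    by (simp add: newton_poly_def)
next
  case (Suc i)
  then show ?case
    unfolding newton_poly_Suc by (intro monic_mult) simp_all
qed

lemma degree_newton_poly [simp]: "degree (newton_poly d i :: 'a::field poly) = i"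
proof (induct i)
  case 0
  then show ?case
    by (simp add: newton_poly_def)
next
  case (Suc i)
  have "newton_poly d i \<noteq> 0"
    using monic_newton_poly[of d i] by auto
  with Suc show ?case
    unfolding newton_poly_Suc by (subst degree_mult_eq) auto
qed

lemma X_times_newton_poly:
  "[:0, 1:] * newton_poly d i = newton_poly d (Suc i) + Polynomial.smult (d i) (newton_poly d i)"
  by (simp add: newton_poly_Suc algebra_simps)

lemma newton_poly_combination_eq_0:
  fixes c :: "nat \<Rightarrow> 'a::field"
  assumes "(\<Sum>i<m. Polynomial.smult (c i) (newton_poly d i)) = 0" and "i < m"
  shows "c i = 0"
  using assms
proof (induct m arbitrary: i)
  case 0
  then show ?case
    by simp
next
  case (Suc m)
  let ?S = "\<Sum>i<m. Polynomial.smult (c i) (newton_poly d i)"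
  have "coeff ?S m = 0"
    by (simp add: coeff_sum coeff_eq_0)
  moreover have "coeff (?S + Polynomial.smult (c m) (newton_poly d m)) m = 0"
    using Suc(2) by simp
  ultimately have "c m = 0"
    using monic_newton_poly[of d m] by simp
  with Suc show ?case
    by (cases "i = m") auto
qed

lemma degree_newton_poly_combination_less:
  fixes c :: "nat \<Rightarrow> 'a::field"
  assumes "0 < m"
  shows "degree (\<Sum>i<m. Polynomial.smult (c i) (newton_poly d i)) < m"
proof -
  have "degree (\<Sum>i<m. Polynomial.smult (c i) (newton_poly d i)) \<le> m - 1"
    by (rule degree_le) (auto simp: coeff_sum coeff_eq_0)
  with assms show ?thesis
    by linarith
qed

text \<open>In the basis \<open>w\<^sub>i = N\<^sub>i(A) v\<close> given by the Newton polynomials \<open>N\<^sub>i = (X - d\<^sub>0)\<cdots>(X - d\<^sub>i\<^sub>-\<^sub>1)\<close>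
  of a cyclic vector \<open>v\<close>, the matrix \<open>A\<close> maps \<open>w\<^sub>i\<close> to \<open>w\<^sub>i\<^sub>+\<^sub>1 + d\<^sub>i w\<^sub>i\<close>.\<close>

lemma cyclic_vector_similar_bidiagonal:
  fixes A :: "'a::field mat" and d :: "nat \<Rightarrow> 'a"
  assumes A: "A \<in> carrier_mat n n" and cyclic: "cyclic_vector A v"
  obtains M P Q where "similar_mat_wit A M P Q"
    and "\<And>r i. r < n \<Longrightarrow> Suc i < n \<Longrightarrow> M $$ (r, i) = (if r = i then d i else if r = Suc i then 1 else 0)"
proof -
  have v: "v \<in> carrier_vec n"
    and indep: "\<And>g. g \<noteq> 0 \<Longrightarrow> degree g < n \<Longrightarrow> poly_mat_eval g A *\<^sub>v v \<noteq> 0\<^sub>v n"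
    using A cyclic by (auto simp: cyclic_vector_def)
  define w where "w i = poly_mat_eval (newton_poly d i) A *\<^sub>v v" for i
  define W where "W = mat n n (\<lambda>(r, i). w i $ r)"
  have w: "w i \<in> carrier_vec n" for i
    using A v by (simp add: w_def)
  have W: "W \<in> carrier_mat n n"
    by (simp add: W_def)
  have W_unit: "W *\<^sub>v unit_vec n i = w i" if "i < n" for i
    using mult_unit_vec_eq_col[OF W that] w[of i] that by (auto simp: W_def intro!: eq_vecI)
  have "det W \<noteq> 0"
  proof
    assume "det W = 0"
    then obtain c where c: "c \<in> carrier_vec n" "c \<noteq> 0\<^sub>v n" "W *\<^sub>v c = 0\<^sub>v n"
      using det_0_iff_vec_prod_zero_field[OF W] by auto
    define g where "g = (\<Sum>i<n. Polynomial.smult (c $ i) (newton_poly d i))"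
    obtain i where "i < n" "c $ i \<noteq> 0"
      using c(1,2) by (metis eq_vecI carrier_vecD index_zero_vec)
    then have "g \<noteq> 0" and "degree g < n"
      using newton_poly_combination_eq_0[where c = "\<lambda>i. c $ i" and m = n]
        degree_newton_poly_combination_less[where c = "\<lambda>i. c $ i" and m = n]
      unfolding g_def by auto
    moreover have "poly_mat_eval g A *\<^sub>v v = W *\<^sub>v c"
    proof (rule eq_vecI)
      fix r
      assume "r < dim_vec (W *\<^sub>v c)"
      then have r: "r < n"
        using W by simp
      have "(poly_mat_eval g A *\<^sub>v v) $ r = (\<Sum>i<n. c $ i * w i $ r)"
        unfolding g_def w_def by (rule poly_mat_eval_sum_smult_vec_index[OF A v r])
      also have "\<dots> = (W *\<^sub>v c) $ r"
        using W c(1) r by (auto simp: W_def scalar_prod_def lessThan_atLeast0 mult.commute)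
      finally show "(poly_mat_eval g A *\<^sub>v v) $ r = (W *\<^sub>v c) $ r" .
    qed (use A v W in simp)
    ultimately show False
      using indep c(3) by simp
  qed
  then obtain Q where Q: "Q \<in> carrier_mat n n" "W * Q = 1\<^sub>m n" "Q * W = 1\<^sub>m n"
    using det_nonzero_obtain_inverse[OF W] by blast
  define M where "M = Q * A * W"
  have M: "M \<in> carrier_mat n n"
    using A W Q by (simp add: M_def)
  have "similar_mat_wit A M W Q"
  proof -
    have "W * M * Q = (W * Q) * A * (W * Q)"
      using A W Q(1) by (simp add: M_def assoc_mult_mat[of _ n n _ n _ n])
    also have "\<dots> = A"
      using A Q by simp
    finally have "A = W * M * Q" ..
    then show ?thesis
      using A W Q M by (auto simp: similar_mat_wit_def Let_def)
  qed
  moreover have "M $$ (r, i) = (if r = i then d i else if r = Suc i then 1 else 0)"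
    if r: "r < n" and i: "Suc i < n" for r i
  proof -
    have "A *\<^sub>v w i = poly_mat_eval ([:0, 1:] * newton_poly d i) A *\<^sub>v v"
      by (simp only: w_def poly_mat_eval_mult_vec[OF A v] poly_mat_eval_X[OF A])
    also have "\<dots> = w (Suc i) + d i \<cdot>\<^sub>v w i"
      unfolding X_times_newton_poly using A v
      by (simp add: poly_mat_eval_add_vec poly_mat_eval_smult_vec w_def)
    also have "\<dots> = W *\<^sub>v (unit_vec n (Suc i) + d i \<cdot>\<^sub>v unit_vec n i)"
      using W i by (simp add: mult_add_distrib_mat_vec[OF W] mult_mat_vec[OF W] W_unit)
    finally have "M *\<^sub>v unit_vec n i = Q *\<^sub>v (W *\<^sub>v (unit_vec n (Suc i) + d i \<cdot>\<^sub>v unit_vec n i))"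
      using A W Q(1) i by (simp add: M_def W_unit assoc_mult_mat_vec[of _ n n _ n])
    also have "\<dots> = (Q * W) *\<^sub>v (unit_vec n (Suc i) + d i \<cdot>\<^sub>v unit_vec n i)"
      using W Q(1) by (intro assoc_mult_mat_vec[symmetric, of _ n n _ n]) auto
    also have "\<dots> = unit_vec n (Suc i) + d i \<cdot>\<^sub>v unit_vec n i"
      using Q(3) by simp
    finally have M_col: "M *\<^sub>v unit_vec n i = unit_vec n (Suc i) + d i \<cdot>\<^sub>v unit_vec n i" .
    have "M $$ (r, i) = (M *\<^sub>v unit_vec n i) $ r"
      using M r i by (simp add: mult_unit_vec_eq_col)
    also have "\<dots> = (unit_vec n (Suc i) + d i \<cdot>\<^sub>v unit_vec n i) $ r"
      unfolding M_col ..
    finally show ?thesis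
      using r i by auto
  qed
  ultimately show thesis
    by (rule that)
qed

definition diagonalizable_within :: "'a::field mat \<Rightarrow> 'a set \<Rightarrow> bool" where
  "diagonalizable_within D L \<longleftrightarrow>
     (\<exists>P Q \<mu>. similar_mat_wit D (mat_diag (dim_row D) \<mu>) P Q \<and> (\<forall>i<dim_row D. \<mu> i \<in> L))"

lemma diagonalizable_within_imp_diagonalizable:
  assumes "diagonalizable_within D L"
  shows "diagonalizable D"
proof -
  define n where "n = dim_row D"
  obtain P Q \<mu> where sim: "similar_mat_wit D (mat_diag n \<mu>) P Q"
    using assms by (auto simp: diagonalizable_within_def n_def)
  have "n = dim_row (mat_diag n \<mu>)"
    by (simp add: mat_diag_def)
  note wit = similar_mat_witD[OF this similar_mat_wit_sym[OF sim]]
  have "diagonal_mat (Q * D * P)"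
    unfolding wit(3)[symmetric] by (simp add: diagonal_mat_def mat_diag_def)
  with wit show ?thesis
    unfolding diagonalizable_def n_def by blast
qed

lemma diagonalizable_within_eigenvalue:
  assumes "diagonalizable_within D L" and "eigenvalue D e"
  shows "e \<in> L"
proof -
  define n where "n = dim_row D"
  obtain P Q \<mu> where sim: "similar_mat_wit D (mat_diag n \<mu>) P Q" and L: "\<And>i. i < n \<Longrightarrow> \<mu> i \<in> L"
    using assms(1) by (auto simp: diagonalizable_within_def n_def)
  have D: "D \<in> carrier_mat n n"
    using similar_mat_witD[OF n_def sim] by blast
  have "similar_mat D (mat_diag n \<mu>)"
    using sim by (auto simp: similar_mat_def)
  then have "char_poly D = char_poly (mat_diag n \<mu>)"
    by (rule char_poly_similar)
  also have "\<dots> = (\<Prod>a\<leftarrow>diag_mat (mat_diag n \<mu>). [:- a, 1:])"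
    by (rule char_poly_upper_triangular) (auto simp: upper_triangular_def mat_diag_def)
  finally have "poly (\<Prod>a\<leftarrow>diag_mat (mat_diag n \<mu>). [:- a, 1:]) e = 0"
    using assms(2) eigenvalue_root_char_poly[OF D] by simp
  then obtain i where "i < n" "e = \<mu> i"
    by (auto simp: poly_prod_list_zero_iff diag_mat_def mat_diag_def)
  then show ?thesis
    using L by simp
qed

lemma diagonalizable_within_similar:
  assumes sim: "similar_mat_wit A D P Q" and "diagonalizable_within D L"
  shows "diagonalizable_within A L"
proof -
  define n where "n = dim_row A"
  have "D \<in> carrier_mat n n"
    using similar_mat_witD[OF n_def sim] by blast
  then obtain P' Q' \<mu> where "similar_mat_wit D (mat_diag n \<mu>) P' Q'" "\<forall>i<n. \<mu> i \<in> L"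
    using assms(2) by (auto simp: diagonalizable_within_def)
  then show ?thesis
    unfolding diagonalizable_within_def n_def[symmetric] using similar_mat_wit_trans[OF sim] by blast
qed

lemma diagonalizable_within_mono:
  "diagonalizable_within D L \<Longrightarrow> L \<subseteq> L' \<Longrightarrow> diagonalizable_within D L'"
  unfolding diagonalizable_within_def by blast

lemma diagonalizable_within_eigenbasis:
  fixes D U :: "'a::field mat"
  assumes D: "D \<in> carrier_mat n n" and U: "U \<in> carrier_mat n n" and "det U \<noteq> 0"
    and eig: "\<And>c. c < n \<Longrightarrow> D *\<^sub>v col U c = \<mu> c \<cdot>\<^sub>v col U c"
    and L: "\<And>c. c < n \<Longrightarrow> \<mu> c \<in> L"
  shows "diagonalizable_within D L"
proof -
  obtain V where V: "V \<in> carrier_mat n n" "U * V = 1\<^sub>m n" "V * U = 1\<^sub>m n"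
    using det_nonzero_obtain_inverse[OF U \<open>det U \<noteq> 0\<close>] by blast
  have DU: "D * U = U * mat_diag n \<mu>"
  proof (rule mat_col_eqI)
    fix c
    assume "c < dim_col (U * mat_diag n \<mu>)"
    then have c: "c < n"
      by (simp add: mat_diag_def)
    have "col (D * U) c = \<mu> c \<cdot>\<^sub>v col U c"
      using col_mult2[OF D U c] eig[OF c] by simp
    also have "\<dots> = col (U * mat_diag n \<mu>) c"
      using U c by (intro eq_vecI) (auto simp: mat_diag_mult_right)
    finally show "col (D * U) c = col (U * mat_diag n \<mu>) c" .
  qed (use D U in \<open>auto simp: mat_diag_def\<close>)
  have "D = D * (U * V)"
    using D V by simp
  also have "\<dots> = D * U * V"
    using D U V by (simp add: assoc_mult_mat[of _ n n _ n _ n])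
  also have "\<dots> = U * mat_diag n \<mu> * V"
    unfolding DU ..
  finally have "similar_mat_wit D (mat_diag n \<mu>) U V"
    using D U V by (intro similar_mat_witI) auto
  then show ?thesis
    using D L by (auto simp: diagonalizable_within_def)
qed

lemma diagonalizable_within_diagonal_except_last_col:
  fixes T :: "'a::field mat"
  assumes T: "T \<in> carrier_mat n n" and n: "0 < n"
    and diag: "\<And>r c. r < n \<Longrightarrow> c < n - 1 \<Longrightarrow> T $$ (r, c) = (if r = c then \<mu> c else 0)"
    and distinct: "\<And>c. c < n - 1 \<Longrightarrow> \<mu> c \<noteq> T $$ (n - 1, n - 1)"
  shows "diagonalizable_within T (\<mu> ` {..<n - 1} \<union> {T $$ (n - 1, n - 1)})"
proof -
  define \<delta> where "\<delta> = T $$ (n - 1, n - 1)"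
  define y where "y r = T $$ (r, n - 1) / (\<delta> - \<mu> r)" for r
  define U :: "'a mat" where "U = mat n n (\<lambda>(r, c). if r = c then 1 else if c = n - 1 then y r else 0)"
  define \<nu> where "\<nu> c = (if c = n - 1 then \<delta> else \<mu> c)" for c
  have U: "U \<in> carrier_mat n n"
    by (simp add: U_def)
  have "upper_triangular U"
    by (auto simp: upper_triangular_def U_def)
  then have "det U = (\<Prod>i = 0..<n. U $$ (i, i))"
    using U by (simp add: det_upper_triangular prod_list_diag_prod)
  also have "\<dots> = 1"
    by (intro prod.neutral) (simp add: U_def)
  finally have "det U \<noteq> 0"
    by simp
  have eig: "T *\<^sub>v col U c = \<nu> c \<cdot>\<^sub>v col U c" if c: "c < n" for c
  proof (rule eq_vecI)
    fix r
    assume "r < dim_vec (\<nu> c \<cdot>\<^sub>v col U c)"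
    then have r: "r < n"
      using U by simp
    have "(T *\<^sub>v col U c) $ r = (\<Sum>l<n. T $$ (r, l) * U $$ (l, c))"
      using T U r c by (simp add: scalar_prod_def lessThan_atLeast0)
    also have "\<dots> = \<nu> c * U $$ (r, c)"
    proof (cases "c = n - 1")
      case False
      then have "(\<Sum>l<n. T $$ (r, l) * U $$ (l, c)) = (\<Sum>l<n. if l = c then T $$ (r, c) else 0)"
        using c by (intro sum.cong) (auto simp: U_def)
      then show ?thesis
        using diag[OF r] c False by (simp add: \<nu>_def U_def r)
    next
      case True
      have "{..<n} = insert (n - 1) {..<n - 1}"
        using n by auto
      then have "(\<Sum>l<n. T $$ (r, l) * U $$ (l, c)) = T $$ (r, n - 1) + (\<Sum>l<n - 1. T $$ (r, l) * y l)"
        using True n by (simp add: U_def)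
      also have "(\<Sum>l<n - 1. T $$ (r, l) * y l) = (\<Sum>l<n - 1. if l = r then \<mu> r * y r else 0)"
        using diag[OF r] by (intro sum.cong) auto
      also have "T $$ (r, n - 1) + (\<Sum>l<n - 1. if l = r then \<mu> r * y r else 0) = \<nu> c * U $$ (r, c)"
      proof (cases "r = n - 1")
        case False
        then have "r < n - 1"
          using r by simp
        then have "\<delta> - \<mu> r \<noteq> 0"
          using distinct[of r] by (simp add: \<delta>_def)
        have "T $$ (r, n - 1) + (\<Sum>l<n - 1. if l = r then \<mu> r * y r else 0) = T $$ (r, n - 1) + \<mu> r * y r"
          using \<open>r < n - 1\<close> by simp
        also have "\<dots> = \<delta> * y r"
        proof -
          have "T $$ (r, n - 1) = (\<delta> - \<mu> r) * y r"
            using \<open>\<delta> - \<mu> r \<noteq> 0\<close> by (simp add: y_def)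
          then show ?thesis
            by (simp add: left_diff_distrib)
        qed
        finally show ?thesis
          using True \<open>r < n - 1\<close> by (simp add: \<nu>_def U_def)
      qed (use True r in \<open>simp add: \<nu>_def U_def \<delta>_def\<close>)
      finally show ?thesis .
    qed
    also have "\<dots> = (\<nu> c \<cdot>\<^sub>v col U c) $ r"
      using U r c by simp
    finally show "(T *\<^sub>v col U c) $ r = (\<nu> c \<cdot>\<^sub>v col U c) $ r" .
  qed (use T U in simp)
  have "\<nu> c \<in> \<nu> ` {..<n}" if "c < n" for c
    using that by blast
  with eig have "diagonalizable_within T (\<nu> ` {..<n})"
    by (rule diagonalizable_within_eigenbasis[OF T U \<open>det U \<noteq> 0\<close>])
  moreover have "\<nu> ` {..<n} \<subseteq> \<mu> ` {..<n - 1} \<union> {T $$ (n - 1, n - 1)}"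
    unfolding \<nu>_def \<delta>_def by auto
  ultimately show ?thesis
    by (rule diagonalizable_within_mono)
qed

lemma diagonalizable_within_eigenvectors_except_last:
  fixes D U :: "'a::field mat"
  assumes D: "D \<in> carrier_mat n n" and U: "U \<in> carrier_mat n n" and "det U \<noteq> 0" and n: "0 < n"
    and eig: "\<And>c. c < n - 1 \<Longrightarrow> D *\<^sub>v col U c = \<mu> c \<cdot>\<^sub>v col U c"
    and last_col: "col U (n - 1) = unit_vec n (n - 1)"
    and last_row: "row U (n - 1) = unit_vec n (n - 1)"
    and distinct: "\<And>c. c < n - 1 \<Longrightarrow> \<mu> c \<noteq> D $$ (n - 1, n - 1)"
  shows "diagonalizable_within D (\<mu> ` {..<n - 1} \<union> {D $$ (n - 1, n - 1)})"
proof -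
  obtain V where V: "V \<in> carrier_mat n n" "U * V = 1\<^sub>m n" "V * U = 1\<^sub>m n"
    using det_nonzero_obtain_inverse[OF U \<open>det U \<noteq> 0\<close>] by blast
  define T where "T = V * D * U"
  have T: "T \<in> carrier_mat n n"
    using V D U by (simp add: T_def)
  have "U * T * V = (U * V) * D * (U * V)"
    using U V(1) D by (simp add: T_def assoc_mult_mat[of _ n n _ n _ n])
  then have sim: "similar_mat_wit D T U V"
    using D U V T by (intro similar_mat_witI) auto
  have T_eq: "T = V * (D * U)"
    using V(1) D U by (simp add: T_def assoc_mult_mat[of _ n n _ n _ n])
  have T_col: "T $$ (r, c) = (if r = c then \<mu> c else 0)" if r: "r < n" and c: "c < n - 1" for r c
  proof -
    have "c < n"
      using c by simp
    have "T $$ (r, c) = row V r \<bullet> col (D * U) c"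
      using V(1) D U r \<open>c < n\<close> by (simp add: T_eq)
    also have "col (D * U) c = \<mu> c \<cdot>\<^sub>v col U c"
      using col_mult2[OF D U \<open>c < n\<close>] eig[OF c] by simp
    also have "row V r \<bullet> (\<mu> c \<cdot>\<^sub>v col U c) = \<mu> c * (row V r \<bullet> col U c)"
      using V(1) U r \<open>c < n\<close> by (simp add: scalar_prod_smult_right)
    also have "row V r \<bullet> col U c = (V * U) $$ (r, c)"
      using V(1) U r \<open>c < n\<close> by simp
    finally show ?thesis
      using V(3) r \<open>c < n\<close> by simp
  qed
  have "row (U * V) (n - 1) = vec n (\<lambda>j. row U (n - 1) \<bullet> col V j)"
    using n by (intro row_mult[OF U V(1)]) simp
  also have "\<dots> = row V (n - 1)"
    unfolding last_row using V(1) n by (intro eq_vecI) simp_all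
  finally have row_V: "row V (n - 1) = unit_vec n (n - 1)"
    using V(2) n by simp
  have col_DU: "col (D * U) (n - 1) = D *\<^sub>v unit_vec n (n - 1)"
    using col_mult2[OF D U] last_col n by simp
  have "T $$ (n - 1, n - 1) = row V (n - 1) \<bullet> col (D * U) (n - 1)"
    using V(1) D U n by (simp add: T_eq)
  also have "\<dots> = unit_vec n (n - 1) \<bullet> (D *\<^sub>v unit_vec n (n - 1))"
    unfolding row_V col_DU ..
  also have "\<dots> = (D *\<^sub>v unit_vec n (n - 1)) $ (n - 1)"
    using D n by (intro scalar_prod_left_unit) auto
  also have "\<dots> = D $$ (n - 1, n - 1)"
    using D n by (simp add: mult_unit_vec_eq_col)
  finally have "T $$ (n - 1, n - 1) = D $$ (n - 1, n - 1)" .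
  with T_col have "diagonalizable_within T (\<mu> ` {..<n - 1} \<union> {D $$ (n - 1, n - 1)})"
    using diagonalizable_within_diagonal_except_last_col[OF T n, of \<mu>] distinct by simp
  then show ?thesis
    by (rule diagonalizable_within_similar[OF sim])
qed

definition square_zero_plus_diagonalizable :: "'a::field mat \<Rightarrow> 'a set \<Rightarrow> bool" where
  "square_zero_plus_diagonalizable B L \<longleftrightarrow>
     (\<exists>N D. N \<in> carrier_mat (dim_row B) (dim_row B) \<and> D \<in> carrier_mat (dim_row B) (dim_row B) \<and>
        B = N + D \<and> N * N = 0\<^sub>m (dim_row B) (dim_row B) \<and> diagonalizable_within D L)"

lemma square_zero_plus_diagonalizable_similar:
  assumes sim: "similar_mat_wit B M P Q" and M: "square_zero_plus_diagonalizable M L"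
  shows "square_zero_plus_diagonalizable B L"
proof -
  define n where "n = dim_row B"
  note wit = similar_mat_witD[OF n_def sim]
  have "dim_row M = n"
    using wit(5) by simp
  then obtain S D where S: "S \<in> carrier_mat n n" and D: "D \<in> carrier_mat n n"
    and M_eq: "M = S + D" and SS: "S * S = 0\<^sub>m n n" and diag: "diagonalizable_within D L"
    using M by (auto simp: square_zero_plus_diagonalizable_def)
  have P: "P \<in> carrier_mat n n" and Q: "Q \<in> carrier_mat n n"
    using wit by auto
  have "B = P * (S + D) * Q"
    using wit(3) by (simp add: M_eq)
  also have "\<dots> = P * S * Q + P * D * Q"
    using P S D Q by (simp add: mult_add_distrib_mat[of _ n n] add_mult_distrib_mat[of _ n n])
  finally have B_eq: "B = P * S * Q + P * D * Q" .
  have "P * S * Q * (P * S * Q) = P * S * (Q * P) * S * Q"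
    using P S Q by (simp add: assoc_mult_mat[of _ n n _ n _ n])
  also have "\<dots> = 0\<^sub>m n n"
    using P S Q wit(2) by (simp add: assoc_mult_mat[of _ n n _ n _ n] SS)
  finally have "P * S * Q * (P * S * Q) = 0\<^sub>m n n" .
  moreover have "similar_mat_wit (P * D * Q) D P Q"
    using P D Q wit(1,2) by (intro similar_mat_witI) auto
  then have "diagonalizable_within (P * D * Q) L"
    using diag by (rule diagonalizable_within_similar)
  ultimately show ?thesis
    unfolding square_zero_plus_diagonalizable_def n_def[symmetric]
    using B_eq P S D Q by (intro exI[of _ "P * S * Q"] exI[of _ "P * D * Q"]) auto
qed

lemma square_zero_plus_diagonalizable_mono:
  "square_zero_plus_diagonalizable B L \<Longrightarrow> L \<subseteq> L' \<Longrightarrow> square_zero_plus_diagonalizable B L'"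
  unfolding square_zero_plus_diagonalizable_def using diagonalizable_within_mono by blast

lemma bidiagonal_square_zero_plus_diagonalizable:
  fixes M :: "'a::field mat"
  assumes M: "M \<in> carrier_mat n n" and "even n" and n: "0 < n"
    and M_entry: "\<And>r i. r < n \<Longrightarrow> Suc i < n \<Longrightarrow> M $$ (r, i) = (if r = i then d i else if r = Suc i then 1 else 0)"
    and d_odd: "\<And>i. odd i \<Longrightarrow> Suc i < n \<Longrightarrow> d i \<noteq> d (Suc i)"
    and d_last: "\<And>i. i < n - 1 \<Longrightarrow> d i \<noteq> M $$ (n - 1, n - 1)"
  shows "square_zero_plus_diagonalizable M (d ` {..<n - 1} \<union> {M $$ (n - 1, n - 1)})"
proof -
  define S :: "'a mat" where "S = mat n n (\<lambda>(r, c). if r = Suc c \<and> even c then 1 else 0)"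
  define D where "D = M - S"
  have S: "S \<in> carrier_mat n n"
    by (simp add: S_def)
  have D: "D \<in> carrier_mat n n"
    using S by (simp add: D_def minus_carrier_mat)
  have M_eq: "M = S + D"
    using M S by (intro eq_matI) (auto simp: D_def)
  have SS: "S * S = 0\<^sub>m n n"
  proof (rule eq_matI)
    fix i j
    assume "i < dim_row (0\<^sub>m n n :: 'a mat)" and "j < dim_col (0\<^sub>m n n :: 'a mat)"
    then have ij: "i < n" "j < n"
      by auto
    have "(S * S) $$ (i, j) = (\<Sum>l<n. S $$ (i, l) * S $$ (l, j))"
      using S ij by (simp add: scalar_prod_def lessThan_atLeast0)
    also have "\<dots> = 0"
      using ij by (intro sum.neutral) (auto simp: S_def)
    finally show "(S * S) $$ (i, j) = 0\<^sub>m n n $$ (i, j)"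
      using ij by simp
  qed (use S in auto)
  have D_entry: "D $$ (r, c) = (if r = c then d c else if r = Suc c \<and> odd c then 1 else 0)"
    if "r < n" "Suc c < n" for r c
    using that M S M_entry[OF that] by (auto simp: D_def S_def)
  have D_last: "D $$ (n - 1, n - 1) = M $$ (n - 1, n - 1)"
    using M S n \<open>even n\<close> by (simp add: D_def S_def)
  define U :: "'a mat" where "U = mat n n (\<lambda>(r, c).
    if odd c \<and> Suc c < n then (if r = c then d c - d (Suc c) else if r = Suc c then 1 else 0)
    else if r = c then 1 else 0)"
  have U: "U \<in> carrier_mat n n"
    by (simp add: U_def)
  have "det U = (\<Prod>i = 0..<n. U $$ (i, i))"
    using det_lower_triangular[of n U] U by (simp add: prod_list_diag_prod U_def)
  also have "\<dots> \<noteq> 0"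
    using d_odd by (auto simp: U_def)
  finally have "det U \<noteq> 0" .
  have last_col: "col U (n - 1) = unit_vec n (n - 1)"
    using n by (intro eq_vecI) (auto simp: U_def)
  have last_row: "row U (n - 1) = unit_vec n (n - 1)"
    using n \<open>even n\<close> by (intro eq_vecI) (auto simp: U_def, presburger)
  have eig: "D *\<^sub>v col U c = d c \<cdot>\<^sub>v col U c" if c: "c < n - 1" for c
  proof (rule eq_vecI)
    fix r
    assume "r < dim_vec (d c \<cdot>\<^sub>v col U c)"
    then have r: "r < n"
      using U by simp
    have Suc_c: "Suc c < n"
      using c by simp
    have "(D *\<^sub>v col U c) $ r = (\<Sum>l<n. D $$ (r, l) * U $$ (l, c))"
      using D U r Suc_c by (simp add: scalar_prod_def lessThan_atLeast0)
    also have "\<dots> = d c * U $$ (r, c)"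
    proof (cases "odd c")
      case False
      have "(\<Sum>l<n. D $$ (r, l) * U $$ (l, c)) = (\<Sum>l<n. if l = c then D $$ (r, c) else 0)"
        using Suc_c False by (intro sum.cong) (auto simp: U_def)
      then show ?thesis
        using r Suc_c False D_entry[OF r Suc_c] by (simp add: U_def)
    next
      case True
      then have "Suc c \<noteq> n - 1"
        using \<open>even n\<close> n by presburger
      then have Suc2: "Suc (Suc c) < n"
        using c by simp
      have "(\<Sum>l<n. D $$ (r, l) * U $$ (l, c))
          = (\<Sum>l<n. (if l = c then D $$ (r, c) * (d c - d (Suc c)) else 0) + (if l = Suc c then D $$ (r, Suc c) else 0))"
        using Suc_c True by (intro sum.cong) (auto simp: U_def)
      also have "\<dots> = D $$ (r, c) * (d c - d (Suc c)) + D $$ (r, Suc c)"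
        using Suc_c by (simp add: sum.distrib)
      also have "\<dots> = d c * U $$ (r, c)"
        using D_entry[OF r Suc_c] D_entry[OF r Suc2] True Suc_c r by (auto simp: U_def algebra_simps)
      finally show ?thesis .
    qed
    also have "\<dots> = (d c \<cdot>\<^sub>v col U c) $ r"
      using U r Suc_c by simp
    finally show "(D *\<^sub>v col U c) $ r = (d c \<cdot>\<^sub>v col U c) $ r" .
  qed (use D U in simp)
  have "diagonalizable_within D (d ` {..<n - 1} \<union> {D $$ (n - 1, n - 1)})"
    using D_last d_last
    by (intro diagonalizable_within_eigenvectors_except_last[OF D U \<open>det U \<noteq> 0\<close> n eig last_col last_row]) auto
  then show ?thesis
    unfolding square_zero_plus_diagonalizable_def D_last
    using M S D M_eq SS by (intro exI[of _ S] exI[of _ D]) auto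
qed

lemma mat_trace_mult_comm:
  fixes X :: "'a::comm_ring_1 mat"
  assumes X: "X \<in> carrier_mat n m" and Y: "Y \<in> carrier_mat m n"
  shows "mat_trace (X * Y) = mat_trace (Y * X)"
proof -
  have "mat_trace (X * Y) = (\<Sum>i<n. \<Sum>k<m. X $$ (i, k) * Y $$ (k, i))"
    unfolding mat_trace_def using X Y by (auto simp: scalar_prod_def lessThan_atLeast0 intro!: sum.cong)
  also have "\<dots> = (\<Sum>k<m. \<Sum>i<n. Y $$ (k, i) * X $$ (i, k))"
    by (subst sum.swap) (simp add: mult.commute)
  also have "\<dots> = mat_trace (Y * X)"
    unfolding mat_trace_def using X Y by (auto simp: scalar_prod_def lessThan_atLeast0 intro!: sum.cong)
  finally show ?thesis .
qed

lemma mat_trace_similar: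
  assumes sim: "similar_mat_wit A B P Q"
  shows "mat_trace A = mat_trace B"
proof -
  define n where "n = dim_row A"
  note wit = similar_mat_witD[OF n_def sim]
  have "mat_trace A = mat_trace ((P * B) * Q)"
    using wit(3) by simp
  also have "\<dots> = mat_trace (Q * (P * B))"
    using wit(5-7) by (intro mat_trace_mult_comm[of _ n n]) auto
  also have "Q * (P * B) = (Q * P) * B"
    using wit(5-7) by (simp add: assoc_mult_mat[of _ n n _ n _ n])
  also have "\<dots> = B"
    using wit(2,5) by simp
  finally show ?thesis .
qed

lemma sum_alternating_pattern:
  "(\<Sum>i<2 * j + 1. if i = 0 then \<theta> else if odd i then \<gamma> else 0) = \<theta> + of_nat j * (\<gamma> :: 'a::semiring_1)"
proof (induct j)
  case 0
  then show ?case
    by simp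
next
  case (Suc j)
  have "{..<2 * Suc j + 1} = insert (2 * j + 2) (insert (2 * j + 1) {..<2 * j + 1})"
    by auto
  with Suc show ?case
    by (simp add: algebra_simps)
qed

lemma non_derogative_square_zero_plus_diagonalizable:
  fixes B :: "'a::field mat"
  assumes B: "B \<in> carrier_mat (2 * m) (2 * m)" and "0 < m" and nd: "non_derogative B" and "\<gamma> \<noteq> 0"
    and \<delta>: "mat_trace B - \<theta> - of_nat (m - 1) * \<gamma> \<notin> {\<theta>, \<gamma>, 0}"
  shows "square_zero_plus_diagonalizable B {\<theta>, \<gamma>, 0, mat_trace B - \<theta> - of_nat (m - 1) * \<gamma>}"
proof -
  define n where "n = 2 * m"
  define \<delta> where "\<delta> = mat_trace B - \<theta> - of_nat (m - 1) * \<gamma>"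
  define d :: "nat \<Rightarrow> 'a" where "d i = (if i = 0 then \<theta> else if odd i then \<gamma> else 0)" for i
  have Bn: "B \<in> carrier_mat n n" and n: "0 < n" "even n"
    using B \<open>0 < m\<close> by (simp_all add: n_def)
  obtain v where "cyclic_vector B v"
    using non_derogative_cyclic_vector[OF Bn nd] .
  then obtain M P Q where sim: "similar_mat_wit B M P Q"
    and M_entry: "\<And>r i. r < n \<Longrightarrow> Suc i < n \<Longrightarrow> M $$ (r, i) = (if r = i then d i else if r = Suc i then 1 else 0)"
    using cyclic_vector_similar_bidiagonal[OF Bn, of v d] by blast
  have M: "M \<in> carrier_mat n n"
    using similar_mat_witD2[OF Bn sim] by blast
  have "mat_trace M = (\<Sum>i<n - 1. M $$ (i, i)) + M $$ (n - 1, n - 1)"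
    using M n sum.lessThan_Suc[of "\<lambda>i. M $$ (i, i)" "n - 1"] by (simp add: mat_trace_def)
  also have "(\<Sum>i<n - 1. M $$ (i, i)) = (\<Sum>i<n - 1. d i)"
    using M_entry by (intro sum.cong) auto
  also have "n - 1 = 2 * (m - 1) + 1"
    using \<open>0 < m\<close> by (simp add: n_def)
  then have "(\<Sum>i<n - 1. d i) = \<theta> + of_nat (m - 1) * \<gamma>"
    unfolding d_def by (simp only: sum_alternating_pattern)
  finally have M_last: "M $$ (n - 1, n - 1) = \<delta>"
    using mat_trace_similar[OF sim] by (simp add: \<delta>_def algebra_simps)
  have "d i \<noteq> d (Suc i)" if "odd i" for i
    using that \<open>\<gamma> \<noteq> 0\<close> by (auto simp: d_def)
  moreover have "d i \<noteq> \<delta>" for i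
    using \<delta> by (auto simp: d_def \<delta>_def)
  ultimately have "square_zero_plus_diagonalizable M (d ` {..<n - 1} \<union> {\<delta>})"
    using bidiagonal_square_zero_plus_diagonalizable[OF M \<open>even n\<close> \<open>0 < n\<close> M_entry, unfolded M_last]
    by blast
  then have "square_zero_plus_diagonalizable M {\<theta>, \<gamma>, 0, \<delta>}"
    by (rule square_zero_plus_diagonalizable_mono) (auto simp: d_def)
  then show ?thesis
    unfolding \<delta>_def by (rule square_zero_plus_diagonalizable_similar[OF sim])
qed

lemma square_zero_plus_diagonalizableD:
  assumes "square_zero_plus_diagonalizable B L" and B: "B \<in> carrier_mat n n"
  shows "\<exists>N D. N \<in> carrier_mat n n \<and> D \<in> carrier_mat n n \<and> B = N + D \<and> N * N = 0\<^sub>m n n \<and>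
           diagonalizable D \<and> (\<forall>e. eigenvalue D e \<longrightarrow> e \<in> L)"
proof -
  have "dim_row B = n"
    using B by simp
  then show ?thesis
    using assms(1) diagonalizable_within_imp_diagonalizable diagonalizable_within_eigenvalue
    unfolding square_zero_plus_diagonalizable_def by metis
qed

lemma CHAR_2_of_nat_odd:
  assumes "CHAR('a::ring_1) = 2" and "odd j"
  shows "(of_nat j :: 'a) = 1"
proof -
  obtain i where "j = 2 * i + 1"
    using \<open>odd j\<close> oddE by blast
  moreover have "(2 :: 'a) = 0"
    using of_nat_CHAR[where 'a = 'a] assms(1) by simp
  ultimately show ?thesis
    by simp
qed

theorem proposition2p7:
  fixes B :: "'a::field mat" and k :: nat and a :: 'a
  assumes char2: "CHAR('a) = 2"
    and card4: "infinite (UNIV :: 'a set) \<or> 4 \<le> card (UNIV :: 'a set)"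
    and k2: "2 \<le> k"
    and B: "B \<in> carrier_mat (4*k) (4*k)"
    and nd: "non_derogative B"
    and a0: "a \<noteq> 0" and a1: "a \<noteq> 1"
  shows "(mat_trace B \<noteq> 0 \<longrightarrow>
           (\<exists>N D. N \<in> carrier_mat (4*k) (4*k) \<and> D \<in> carrier_mat (4*k) (4*k) \<and>
              B = N + D \<and> N * N = 0\<^sub>m (4*k) (4*k) \<and> diagonalizable D \<and>
              (\<forall>e. eigenvalue D e \<longrightarrow>
                 e \<in> {0, mat_trace B, mat_trace B * a, mat_trace B * (a + 1)})))
       \<and> (mat_trace B = 0 \<longrightarrow>
           (\<exists>N D. N \<in> carrier_mat (4*k) (4*k) \<and> D \<in> carrier_mat (4*k) (4*k) \<and>
              B = N + D \<and> N * N = 0\<^sub>m (4*k) (4*k) \<and> diagonalizable D \<and>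
              (\<forall>e. eigenvalue D e \<longrightarrow> e \<in> {0, 1, a, a + 1})))"
proof -
  let ?t = "mat_trace B"
  have B': "B \<in> carrier_mat (2 * (2 * k)) (2 * (2 * k))" and "0 < 2 * k"
    using B k2 by simp_all
  have "odd (2 * k - 1)"
    using k2 by presburger
  then have one: "(of_nat (2 * k - 1) :: 'a) = 1"
    by (rule CHAR_2_of_nat_odd[OF char2])
  have trace_shift: "?t - \<theta> - of_nat (2 * k - 1) * \<gamma> = ?t + \<theta> + \<gamma>" for \<theta> \<gamma> :: 'a
    by (simp only: one minus_CHAR_2[OF char2] mult_1)
  have "a + 1 \<noteq> 0"
    using a1 uminus_CHAR_2[OF char2, of 1] by (metis add_eq_0_iff2)
  note split = non_derogative_square_zero_plus_diagonalizable[OF B' \<open>0 < 2 * k\<close> nd, unfolded trace_shift]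
  have "square_zero_plus_diagonalizable B {0, ?t, ?t * a, ?t * (a + 1)}" if "?t \<noteq> 0"
  proof -
    have "?t + 0 + ?t * a = ?t * (a + 1)" and "?t * (a + 1) \<noteq> ?t * a"
      using that by (simp_all add: distrib_left)
    moreover have "?t * (a + 1) \<noteq> 0"
      using that \<open>a + 1 \<noteq> 0\<close> by simp
    ultimately have "square_zero_plus_diagonalizable B {0, ?t * a, 0, ?t * (a + 1)}"
      using split[of "?t * a" 0] that a0 by simp
    then show ?thesis
      by (rule square_zero_plus_diagonalizable_mono) auto
  qed
  moreover have "square_zero_plus_diagonalizable B {0, 1, a, a + 1}" if "?t = 0"
  proof -
    have "1 + a \<notin> {1, a, 0}"
      using a0 \<open>a + 1 \<noteq> 0\<close> by (auto simp: add.commute)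
    then have "square_zero_plus_diagonalizable B {1, a, 0, 1 + a}"
      using split[of a 1] that a0 by simp
    then show ?thesis
      by (rule square_zero_plus_diagonalizable_mono) (auto simp: add.commute)
  qed
  ultimately show ?thesis
    using square_zero_plus_diagonalizableD[OF _ B] by blast
qed

end
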